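(* Let $P=\langle p_1,\dots,p_n\rangle$ be a set of points in convex position. For any three points $p_i,p_l,p_j\in P$ ordered counterclockwise on the convex hull of $P$, and any two points $p,q$ with $p\in P(i,l)$, $q\in P(l,j)$, and $p,q\notin D(p_i,p_l,p_j)$, we have $$|pq|\ge\min\{|pp_i|,|pp_l|,|p_ip_j|,|p_lp_j|,|p_lp_i|,|qp_l|,|qp_j|\}.$$
   Context: $P$ is in convex position (every point is a hull vertex), no three points collinear, no four cocircular, listed counterclockwise along the hull. $P(i,l)$ denotes the points of $P$ strictly between $p_i$ and $p_l$ moving counterclockwise from $p_i$ to $p_l$. $D(p_i,p_l,p_j)$ is the disk whose boundary circle passes through $p_i,p_l,p_j$. $|xy|$ is Euclidean distance. *)

theory Defs
  imports "HOL-Analysis.Analysis"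
begin

(* Points of the plane are complex numbers; P = p ` {..<n}, indices 0..n-1. *)

definition orient :: "complex \<Rightarrow> complex \<Rightarrow> complex \<Rightarrow> real" where
  "orient a b c = Im (cnj (b - a) * (c - a))"   (* > 0 iff a,b,c counterclockwise *)

definition convex_position :: "nat \<Rightarrow> (nat \<Rightarrow> complex) \<Rightarrow> bool" where
  "convex_position n p \<longleftrightarrow> inj_on p {..<n} \<and>
     (\<forall>k<n. p k \<notin> convex hull (p ` ({..<n} - {k})))"

definition ccw_listed :: "nat \<Rightarrow> (nat \<Rightarrow> complex) \<Rightarrow> bool" where
  "ccw_listed n p \<longleftrightarrow> (\<forall>i j k. i < j \<and> j < k \<and> k < n \<longrightarrow> orient (p i) (p j) (p k) > 0)"

definition no_three_collinear :: "nat \<Rightarrow> (nat \<Rightarrow> complex) \<Rightarrow> bool" where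
  "no_three_collinear n p \<longleftrightarrow>
     (\<forall>i<n. \<forall>j<n. \<forall>k<n. distinct [i,j,k] \<longrightarrow> \<not> collinear {p i, p j, p k})"

definition no_four_cocircular :: "nat \<Rightarrow> (nat \<Rightarrow> complex) \<Rightarrow> bool" where
  "no_four_cocircular n p \<longleftrightarrow>
     (\<forall>i<n. \<forall>j<n. \<forall>k<n. \<forall>m<n. distinct [i,j,k,m] \<longrightarrow>
        \<not> (\<exists>c. dist c (p i) = dist c (p j) \<and> dist c (p i) = dist c (p k) \<and> dist c (p i) = dist c (p m)))"

definition cyc_between :: "nat \<Rightarrow> nat \<Rightarrow> nat \<Rightarrow> bool" where
  "cyc_between i l m \<longleftrightarrow> (if i < l then i < m \<and> m < l else i < m \<or> m < l)"

definition Pbetween :: "nat \<Rightarrow> (nat \<Rightarrow> complex) \<Rightarrow> nat \<Rightarrow> nat \<Rightarrow> complex set" where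
  "Pbetween n p i l = p ` {m. m < n \<and> cyc_between i l m}"

definition circumcenter :: "complex \<Rightarrow> complex \<Rightarrow> complex \<Rightarrow> complex" where
  "circumcenter a b c = (THE z. dist z a = dist z b \<and> dist z a = dist z c)"

definition circdisk :: "complex \<Rightarrow> complex \<Rightarrow> complex \<Rightarrow> complex set" where
  "circdisk a b c = cball (circumcenter a b c) (dist (circumcenter a b c) a)"

end

theory Submission
  imports Defs
begin

text \<open>
  Write \<open>x = p a\<close>, \<open>y = p b\<close> and let \<open>C\<close>, \<open>R\<close> be the centre and radius of the circle
  through \<open>p i\<close>, \<open>p l\<close>, \<open>p j\<close>. The cyclic order \<open>i, a, l, b, j\<close> puts \<open>p i\<close> and \<open>p j\<close> on
  one side of the line \<open>xy\<close> and \<open>p l\<close> on the other, while the chord from \<open>p i\<close> to \<open>p l\<close>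
  separates \<open>x\<close> from \<open>y\<close>. Move \<open>C\<close> to \<open>0\<close> and rotate so that \<open>xy\<close> is horizontal at
  height \<open>h\<close>. The chord meets the line inside the disk, so \<open>x\<close> and \<open>y\<close>, being outside,
  lie beyond the two ends of the segment \<open>[-w, w]\<close> that the disk cuts out of the line,
  \<open>w = sqrt (R\<^sup>2 - h\<^sup>2)\<close>; hence \<open>|xy| > 2w\<close>. If \<open>h \<ge> 0\<close>, the points \<open>p i\<close>, \<open>p j\<close> of the
  circle above the line are at distance at most \<open>2w\<close>, so \<open>|xy| \<ge> |p\<^sub>ip\<^sub>j|\<close>. If \<open>h < 0\<close>,
  the angle at \<open>p l\<close> (below the line) in the triangle \<open>x p\<^sub>l y\<close> is obtuse, so
  \<open>|xy| \<ge> |xp\<^sub>l|\<close>.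
\<close>

lemma orient_swap: "orient a c b = - orient a b c"
  by (simp add: orient_def algebra_simps)

lemma orient_cyclic: "orient a b c = orient b c a"
  by (simp add: orient_def algebra_simps)

lemma ccw_listed_orient_pos:
  assumes "ccw_listed n p" "r < n" "s < n" "t < n" "r \<noteq> t" "cyc_between r t s"
  shows "0 < orient (p r) (p s) (p t)"
proof -
  consider "r < s \<and> s < t" | "s < t \<and> t < r" | "t < r \<and> r < s"
    using assms(5,6) unfolding cyc_between_def by (auto split: if_splits)
  then show ?thesis
    using assms(1-4) unfolding ccw_listed_def by cases (metis orient_cyclic)+
qed

lemma equidistant_iff_inner:
  "dist z a = dist z b \<longleftrightarrow> 2 * inner (z - a) (b - a) = (norm (b - a))\<^sup>2"
proof -
  have "(dist z b)\<^sup>2 = (dist z a)\<^sup>2 - 2 * inner (z - a) (b - a) + (norm (b - a))\<^sup>2"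
    unfolding dist_norm power2_norm_eq_inner by (simp add: inner_simps inner_commute)
  moreover have "dist z a = dist z b \<longleftrightarrow> (dist z a)\<^sup>2 = (dist z b)\<^sup>2"
    by (simp add: power2_eq_iff_nonneg)
  ultimately show ?thesis
    by linarith
qed

lemma orthogonal_to_independent_pair_eq_zero:
  assumes "inner d u = 0" "inner d v = 0" "Im (cnj u * v) \<noteq> 0"
  shows "d = 0"
proof -
  have "Re d * Im (cnj u * v) = Im v * inner d u - Im u * inner d v"
       "Im d * Im (cnj u * v) = Re u * inner d v - Re v * inner d u"
    by (simp_all add: inner_complex_def algebra_simps)
  then show ?thesis using assms by (simp add: complex_eq_iff)
qed

lemma circumcenter_equidistant:
  assumes "orient a b c \<noteq> 0"
  shows "dist (circumcenter a b c) a = dist (circumcenter a b c) b"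
    and "dist (circumcenter a b c) a = dist (circumcenter a b c) c"
proof -
  let ?eq = "\<lambda>z. dist z a = dist z b \<and> dist z a = dist z c"
  have indep: "Im (cnj (b - a) * (c - a)) \<noteq> 0"
    using assms by (simp add: orient_def)
  define f where "f d = Complex (inner d (b - a)) (inner d (c - a))" for d
  have "linear f"
    by (rule linearI) (simp_all add: f_def inner_simps complex_eq_iff algebra_simps)
  moreover have "inj f"
    using orthogonal_to_independent_pair_eq_zero[OF _ _ indep] \<open>linear f\<close>
    by (auto simp: linear_injective_0 f_def complex_eq_iff)
  ultimately obtain d where "f d = Complex ((norm (b - a))\<^sup>2 / 2) ((norm (c - a))\<^sup>2 / 2)"
    by (metis linear_injective_imp_surjective surjD)
  then have "?eq (a + d)"
    by (simp add: equidistant_iff_inner f_def)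
  moreover have "z = z'" if "?eq z" "?eq z'" for z z'
  proof -
    have "inner (z - z') (b - a) = 0" "inner (z - z') (c - a) = 0"
      using that by (simp_all add: equidistant_iff_inner inner_diff_left)
    then have "z - z' = 0"
      using indep by (rule orthogonal_to_independent_pair_eq_zero)
    then show ?thesis
      by simp
  qed
  ultimately have "\<exists>!z. ?eq z"
    by blast
  then have "?eq (circumcenter a b c)"
    unfolding circumcenter_def by (rule theI')
  then show "dist (circumcenter a b c) a = dist (circumcenter a b c) b"
    and "dist (circumcenter a b c) a = dist (circumcenter a b c) c"
    by auto
qed

lemma chord_crosses_horizontal_line:
  fixes I L :: complex
  assumes "cmod I \<le> R" "cmod L \<le> R" "Im L < h" "h < Im I"
  obtains Z where "Im Z = h" "cmod Z \<le> R"
    and "\<And>P. Im P = h \<Longrightarrow> orient I L P = (Im I - Im L) * (Re P - Re Z)"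
proof
  define t where "t = (Im I - h) / (Im I - Im L)"
  have t: "0 \<le> t" "t \<le> 1" "h = Im I + t * (Im L - Im I)"
    using assms by (auto simp: t_def field_simps)
  define Z where "Z = (1 - t) *\<^sub>R I + t *\<^sub>R L"
  have "Z \<in> closed_segment I L"
    using t by (auto simp: closed_segment_def Z_def)
  also have "closed_segment I L \<subseteq> cball 0 R"
    using assms by (intro closed_segment_subset) auto
  finally show "cmod Z \<le> R"
    by simp
  show "Im Z = h"
    using t by (simp add: Z_def algebra_simps)
  show "orient I L P = (Im I - Im L) * (Re P - Re Z)" if "Im P = h" for P
  proof -
    have P: "Im P = Im I + t * (Im L - Im I)"
      using that t(3) by simp
    show ?thesis
      by (simp add: orient_def Z_def P algebra_simps)
  qed
qed

lemma left_of_horizontal_chord: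
  assumes "Im X = Im Z" "cmod Z \<le> R" "R < cmod X" "Re X < Re Z"
  shows "Re X < - sqrt (R\<^sup>2 - (Im Z)\<^sup>2)"
proof -
  have "0 \<le> R"
    using assms(2) norm_ge_zero order_trans by blast
  then have "(cmod Z)\<^sup>2 \<le> R\<^sup>2" "R\<^sup>2 < (cmod X)\<^sup>2"
    using assms(2,3) by (simp_all add: power_mono power_strict_mono)
  then have "(Re Z)\<^sup>2 + (Im Z)\<^sup>2 \<le> R\<^sup>2" "R\<^sup>2 < (Re X)\<^sup>2 + (Im Z)\<^sup>2"
    by (simp_all add: cmod_power2 assms(1))
  then have "\<bar>Re Z\<bar> \<le> sqrt (R\<^sup>2 - (Im Z)\<^sup>2)" "sqrt (R\<^sup>2 - (Im Z)\<^sup>2) < sqrt ((Re X)\<^sup>2)"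
    unfolding real_sqrt_less_iff by (auto intro: real_le_rsqrt)
  then show ?thesis
    using assms(4) by (simp add: abs_le_iff abs_if split: if_split_asm)
qed

lemma right_of_horizontal_chord:
  assumes "Im Y = Im Z" "cmod Z \<le> R" "R < cmod Y" "Re Z < Re Y"
  shows "sqrt (R\<^sup>2 - (Im Z)\<^sup>2) < Re Y"
  using left_of_horizontal_chord[of "- cnj Y" "- cnj Z" R] assms by simp

lemma circle_points_above_horizontal_line_dist_le:
  assumes "cmod I = R" "cmod J = R" "0 \<le> h" "h \<le> Im I" "h \<le> Im J"
  shows "dist I J \<le> 2 * sqrt (R\<^sup>2 - h\<^sup>2)"
proof -
  have I: "(Re I)\<^sup>2 + (Im I)\<^sup>2 = R\<^sup>2" and J: "(Re J)\<^sup>2 + (Im J)\<^sup>2 = R\<^sup>2"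
    using assms(1,2) by (simp_all add: cmod_power2[symmetric])
  have "h\<^sup>2 \<le> (Im I)\<^sup>2"
    using assms(3,4) by (intro power_mono) auto
  then have nonneg: "0 \<le> R\<^sup>2 - h\<^sup>2"
    using I zero_le_power2[of "Re I"] by linarith
  then have "(2 * sqrt (R\<^sup>2 - h\<^sup>2))\<^sup>2 = 4 * (R\<^sup>2 - h\<^sup>2)"
    by (simp add: power_mult_distrib del: real_sqrt_pow2_iff)
  moreover have "(2 * h)\<^sup>2 \<le> (Im I + Im J)\<^sup>2"
    using assms(3-5) by (intro power_mono) auto
  moreover have "0 \<le> (Re I + Re J)\<^sup>2"
    by simp
  moreover have "(dist I J)\<^sup>2 = (Re I - Re J)\<^sup>2 + (Im I - Im J)\<^sup>2"
    by (simp add: dist_norm cmod_power2)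
  ultimately have "(dist I J)\<^sup>2 \<le> (2 * sqrt (R\<^sup>2 - h\<^sup>2))\<^sup>2"
    using I J by (simp add: power2_eq_square algebra_simps)
  then show ?thesis
    by (rule power2_le_imp_le) (use nonneg in simp)
qed

lemma dist_to_circle_point_below_horizontal_chord_le:
  assumes "cmod L = R" "Im L \<le> h" "h \<le> 0" "Im X = h" "Im Y = h"
    and "Re X \<le> - sqrt (R\<^sup>2 - h\<^sup>2)" "sqrt (R\<^sup>2 - h\<^sup>2) \<le> Re Y"
  shows "dist X L \<le> dist X Y"
proof -
  define w where "w = sqrt (R\<^sup>2 - h\<^sup>2)"
  have L: "(Re L)\<^sup>2 + (Im L)\<^sup>2 = R\<^sup>2"
    using assms(1) by (simp add: cmod_power2[symmetric])
  have "h\<^sup>2 \<le> (Im L)\<^sup>2"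
    using assms(2,3) by (simp add: abs_le_square_iff[symmetric])
  then have "(Re L)\<^sup>2 \<le> R\<^sup>2 - h\<^sup>2" "0 \<le> R\<^sup>2 - h\<^sup>2"
    using L zero_le_power2[of "Re L"] by linarith+
  then have w: "\<bar>Re L\<bar> \<le> w" "w\<^sup>2 = R\<^sup>2 - h\<^sup>2"
    unfolding w_def by (simp_all add: real_le_rsqrt)
  have "(w + Re L) * (w - Re L) \<le> (Re L - Re X) * (Re Y - Re L)"
    using w(1) assms(6,7)[folded w_def] by (intro mult_mono) auto
  then have "(Re X - Re L) * (Re Y - Re L) \<le> (Re L)\<^sup>2 - w\<^sup>2"
    by (simp add: power2_eq_square algebra_simps)
  moreover have "inner (X - L) (Y - L) = (Re X - Re L) * (Re Y - Re L) + (h - Im L)\<^sup>2"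
    using assms(4,5) by (simp add: inner_complex_def power2_eq_square)
  moreover have "(Re L)\<^sup>2 - w\<^sup>2 + (h - Im L)\<^sup>2 = 2 * h * (h - Im L)"
    using L w(2) by (simp add: power2_eq_square algebra_simps)
  ultimately have "inner (X - L) (Y - L) \<le> 2 * h * (h - Im L)"
    by linarith
  also have "\<dots> \<le> 0"
    using assms(2,3) by (simp add: mult_nonpos_nonneg)
  finally have "inner (X - L) (Y - L) \<le> 0" .
  moreover have "(dist X Y)\<^sup>2 = (dist X L)\<^sup>2 + (dist Y L)\<^sup>2 - 2 * inner (X - L) (Y - L)"
    by (simp add: dist_norm power2_norm_eq_inner inner_simps inner_commute)
  ultimately have "(dist X L)\<^sup>2 \<le> (dist X Y)\<^sup>2"
    using zero_le_power2[of "dist Y L"] by linarith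
  then show ?thesis
    by (rule power2_le_imp_le) simp
qed

lemma dist_ge_if_separated_by_chord_normalized:
  assumes on_circle: "cmod I = R" "cmod L = R" "cmod J = R"
    and outside: "R < cmod X" "R < cmod Y"
    and heights: "Im Y = Im X" "Im X < Im I" "Im X < Im J" "Im L < Im X"
    and sides: "orient I L X < 0" "0 < orient I L Y"
  shows "dist X L \<le> dist X Y \<or> dist I J \<le> dist X Y"
proof -
  define h where "h = Im X"
  obtain Z where Z: "Im Z = h" "cmod Z \<le> R"
    and orient_IL: "\<And>P. Im P = h \<Longrightarrow> orient I L P = (Im I - Im L) * (Re P - Re Z)"
    using chord_crosses_horizontal_line[of I R L h] on_circle heights by (auto simp: h_def)
  have between: "Re X < Re Z" "Re Z < Re Y"
    using sides orient_IL[of X] orient_IL[of Y] heights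
    by (auto simp: h_def mult_less_0_iff zero_less_mult_iff)
  then have X: "Re X < - sqrt (R\<^sup>2 - h\<^sup>2)" and Y: "sqrt (R\<^sup>2 - h\<^sup>2) < Re Y"
    using left_of_horizontal_chord[of X Z R] right_of_horizontal_chord[of Y Z R] Z outside heights
    by (auto simp: h_def)
  have XY: "dist X Y = Re Y - Re X"
    using heights between by (simp add: dist_norm cmod_eq_Re)
  show ?thesis
  proof (cases "0 \<le> h")
    case True
    then have "dist I J \<le> 2 * sqrt (R\<^sup>2 - h\<^sup>2)"
      using heights on_circle by (intro circle_points_above_horizontal_line_dist_le) (auto simp: h_def)
    then show ?thesis
      using X Y XY by simp
  next
    case False
    then have "dist X L \<le> dist X Y"
      using heights on_circle X Y
      by (intro dist_to_circle_point_below_horizontal_chord_le[where h = h]) (auto simp: h_def)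
    then show ?thesis
      by simp
  qed
qed

lemma orient_rotate_translate:
  "orient (w * (a - c)) (w * (b - c)) (w * (d - c)) = (cmod w)\<^sup>2 * orient a b d"
proof -
  have "cnj (w * (b - c) - w * (a - c)) * (w * (d - c) - w * (a - c))
      = (w * cnj w) * (cnj (b - a) * (d - a))"
    by (simp add: algebra_simps)
  also have "w * cnj w = of_real ((cmod w)\<^sup>2)"
    by (rule complex_norm_square[symmetric])
  finally show ?thesis
    by (simp add: orient_def)
qed

lemma dist_rotate_translate: "dist (w * (a - c)) (w * (b - c)) = cmod w * dist a b"
  by (simp add: dist_norm norm_mult flip: right_diff_distrib)

lemma orient_of_real_diff: "b - a = complex_of_real d \<Longrightarrow> orient a b x = d * (Im x - Im a)"
  by (simp add: orient_def)

lemma dist_ge_if_separated_by_chord: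
  assumes on_circle: "dist C I = R" "dist C L = R" "dist C J = R"
    and outside: "R < dist C X" "R < dist C Y"
    and orients: "0 < orient X Y I" "0 < orient X Y J" "0 < orient X L Y"
      "0 < orient I X L" "0 < orient I L Y"
  shows "dist X L \<le> dist X Y \<or> dist I J \<le> dist X Y"
proof -
  have "X \<noteq> Y"
    using orients(1) by (auto simp: orient_def)
  define w where "w = cnj (Y - X) / cmod (Y - X)"
  define T where "T z = w * (z - C)" for z
  have w_unit: "cmod w = 1"
    using \<open>X \<noteq> Y\<close> by (simp add: w_def norm_divide del: complex_cnj_diff)
  have "T Y - T X = w * (Y - X)"
    by (simp add: T_def algebra_simps)
  also have "\<dots> = (Y - X) * cnj (Y - X) / cmod (Y - X)"
    by (simp add: w_def del: complex_cnj_diff)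
  also have "\<dots> = cmod (Y - X)"
    using \<open>X \<noteq> Y\<close> by (simp add: complex_norm_square[symmetric] power2_eq_square del: complex_cnj_diff)
  finally have XY_horizontal: "T Y - T X = cmod (Y - X)" .
  have orient_T: "orient (T a) (T b) (T d) = orient a b d" for a b d
    using orient_rotate_translate[of w a C b d] w_unit by (simp add: T_def)
  have dist_T: "dist (T a) (T b) = dist a b" for a b
    using dist_rotate_translate[of w a C b] w_unit by (simp add: T_def)
  have norm_T: "cmod (T a) = dist C a" for a
    using dist_T[of C a] by (simp add: T_def)
  have height: "orient X Y P = cmod (Y - X) * (Im (T P) - Im (T X))" for P
    using orient_of_real_diff[OF XY_horizontal, of "T P"] orient_T by simp
  have "dist (T X) (T L) \<le> dist (T X) (T Y) \<or> dist (T I) (T J) \<le> dist (T X) (T Y)"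
  proof (rule dist_ge_if_separated_by_chord_normalized[where R = R])
    show "Im (T Y) = Im (T X)"
      using XY_horizontal by (simp add: complex_eq_iff)
    show "Im (T X) < Im (T I)" "Im (T X) < Im (T J)" "Im (T L) < Im (T X)"
      using orients(1-3) height[of I] height[of J] height[of L] \<open>X \<noteq> Y\<close> orient_swap[of X L Y]
      by (auto simp: zero_less_mult_iff mult_less_0_iff)
    show "orient (T I) (T L) (T X) < 0" "0 < orient (T I) (T L) (T Y)"
      using orients(4,5) orient_swap[of I X L] by (simp_all add: orient_T)
  qed (use on_circle outside norm_T in auto)
  then show ?thesis
    by (simp add: dist_T)
qed

theorem lemma21:
  fixes n :: nat and p :: "nat \<Rightarrow> complex" and i l j :: nat and x y :: complex
  assumes "convex_position n p"
    and "ccw_listed n p"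
    and "no_three_collinear n p"
    and "no_four_cocircular n p"
    and "i < n" "l < n" "j < n"
    and "distinct [i, l, j]"
    and "cyc_between i j l"
    and "x \<in> Pbetween n p i l"
    and "y \<in> Pbetween n p l j"
    and "x \<notin> circdisk (p i) (p l) (p j)"
    and "y \<notin> circdisk (p i) (p l) (p j)"
  shows "dist x y \<ge> Min {dist x (p i), dist x (p l), dist (p i) (p j), dist (p l) (p j),
                          dist (p l) (p i), dist y (p l), dist y (p j)}"
proof -
  obtain a b where a: "a < n" "cyc_between i l a" "x = p a"
    and b: "b < n" "cyc_between l j b" "y = p b"
    using assms(10,11) unfolding Pbetween_def by auto
  have order: "cyc_between a i b" "cyc_between a j b" "cyc_between a b l" "cyc_between i b l"
    "a \<noteq> i" "a \<noteq> j" "a \<noteq> b" "i \<noteq> b"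
    using a(2) b(2) assms(8,9) unfolding cyc_between_def by (auto split: if_splits)
  note orient_pos = ccw_listed_orient_pos[OF assms(2)]
  define C where "C = circumcenter (p i) (p l) (p j)"
  have "0 < orient (p i) (p l) (p j)"
    using assms(5-9) by (intro orient_pos) auto
  then have "dist C (p l) = dist C (p i)" "dist C (p j) = dist C (p i)"
    using circumcenter_equidistant[of "p i" "p l" "p j"] by (simp_all add: C_def)
  moreover have "dist C (p i) < dist C x" "dist C (p i) < dist C y"
    using assms(12,13) by (simp_all add: circdisk_def C_def)
  ultimately have "dist x (p l) \<le> dist x y \<or> dist (p i) (p j) \<le> dist x y"
    unfolding a(3) b(3)
    by (intro dist_ge_if_separated_by_chord[where C = C and R = "dist C (p i)"] orient_pos)
      (use a b assms(5-8) order in auto)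
  then show ?thesis
    by (auto simp: min_le_iff_disj)
qed

end
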